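(* Let $A$ be a commutative ring, $p\ge1$, and $W$, $E$ as defined below. Let $F=\{F_i\}_{i\ge0}$ be a graded left $W$-module (so $F_i=0$ for $i<0$) with $F_0\neq0$. Then $F_i\ne0$ for every $0\le i\le p$. Moreover, if $F_i=0$ for all $i\ge p+1$, then the map $W\otimes_AF_0\to F$, $w\otimes f\mapsto wf$, induces an isomorphism of graded left $W$-modules \[ E\otimes_AF_0\xrightarrow{\ \cong\ }F . \]
   Context: $W$ is the graded $A$-algebra $A\langle s_1,\dots,s_p,t_1,\dots,t_p\rangle/(s_it_j+t_js_i-\delta_{ij}\mid1\le i,j\le p)$, where $A\langle\cdots\rangle$ is the free associative $A$-algebra, $|s_i|=1$, $|t_i|=-1$, and $\delta_{ij}$ is the Kronecker delta. $E$ is the quotient of $W$ by the left ideal generated by the elements $t_i$, $s_i^2$, and $s_is_j+s_js_i$ for $1\le i,j\le p$; it is a graded left $W$-module, which as an $A$-module is the exterior algebra $A[\boldsymbol s]$ on $s_1,\dots,s_p$ (free with basis the monomials $s_{i_1}\cdots s_{i_n}$, $i_1<\cdots<i_n$), with $t_i$ acting as graded derivations satisfying $t_i\cdot s_j=\delta_{ij}$. $E\otimes_AF_0$ is a graded left $W$-module via the action on $E$, with $F_0$ in degree $0$. *)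

theory Defs
  imports Main "HOL.Modules"
begin

definition lin_on :: "('a::comm_ring_1 \<Rightarrow> 'm::ab_group_add \<Rightarrow> 'm) \<Rightarrow> 'm set \<Rightarrow> 'm set \<Rightarrow> ('m \<Rightarrow> 'm) \<Rightarrow> bool"
  where "lin_on scale X Y f \<longleftrightarrow>
     (\<forall>x\<in>X. f x \<in> Y) \<and> (\<forall>x\<in>X. \<forall>y\<in>X. f (x + y) = f x + f y) \<and>
     (\<forall>c. \<forall>x\<in>X. f (scale c x) = scale c (f x))"

text \<open>A graded left W-module F = (F_i)_{i \<ge> 0} (F_i = 0 for i < 0), W generated over A by
  s_1..s_p (degree 1) and t_1..t_p (degree -1) subject to s_j t_k + t_k s_j = delta_jk.
  The components F_i are submodules of an ambient A-module (scale).
  s j i is the action of s_j on F_i (into F_(i+1)); t j i (i \<ge> 1) is the action of t_j on F_i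
  (into F_(i-1)); t_j acts as zero on F_0 since F_(-1) = 0.\<close>
definition graded_W_module ::
  "('a::comm_ring_1 \<Rightarrow> 'm::ab_group_add \<Rightarrow> 'm) \<Rightarrow> nat \<Rightarrow> (nat \<Rightarrow> 'm set)
     \<Rightarrow> (nat \<Rightarrow> nat \<Rightarrow> 'm \<Rightarrow> 'm) \<Rightarrow> (nat \<Rightarrow> nat \<Rightarrow> 'm \<Rightarrow> 'm) \<Rightarrow> bool"
  where "graded_W_module scale p F s t \<longleftrightarrow>
     module scale \<and> (\<forall>i. module.subspace scale (F i)) \<and>
     (\<forall>j\<in>{1..p}. \<forall>i. lin_on scale (F i) (F (Suc i)) (s j i) \<and>
                      lin_on scale (F (Suc i)) (F i) (t j (Suc i))) \<and>
     (\<forall>j\<in>{1..p}. \<forall>k\<in>{1..p}.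
        (\<forall>x\<in>F 0. t k 1 (s j 0 x) = (if j = k then x else 0)) \<and>
        (\<forall>i. \<forall>x\<in>F (Suc i).
           s j i (t k (Suc i) x) + t k (Suc (Suc i)) (s j (Suc i) x) = (if j = k then x else 0)))"

fun s_mon :: "(nat \<Rightarrow> nat \<Rightarrow> 'm \<Rightarrow> 'm) \<Rightarrow> nat list \<Rightarrow> 'm \<Rightarrow> 'm" where
  "s_mon s [] x = x"
| "s_mon s (j # js) x = s j (length js) (s_mon s js x)"

text \<open>Degree-i part of E \<otimes>_A F_0: since E_i is A-free with basis the monomials s_S,
  S \<subseteq> {1..p}, |S| = i (increasing order), E_i \<otimes>_A F_0 = direct sum over such S of F_0;
  an element is a finitely supported family g with g S \<in> F_0.\<close>
definition EF0 :: "nat \<Rightarrow> (nat \<Rightarrow> 'm::zero set) \<Rightarrow> nat \<Rightarrow> (nat set \<Rightarrow> 'm) set"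
  where "EF0 p F i = {g. (\<forall>S. g S \<in> F 0) \<and> (\<forall>S. g S \<noteq> 0 \<longrightarrow> S \<subseteq> {1..p} \<and> card S = i)}"

definition mult_map :: "nat \<Rightarrow> (nat \<Rightarrow> nat \<Rightarrow> 'm \<Rightarrow> 'm) \<Rightarrow> nat \<Rightarrow> (nat set \<Rightarrow> 'm) \<Rightarrow> 'm::comm_monoid_add"
  where "mult_map p s i g = (\<Sum>S\<in>{S. S \<subseteq> {1..p} \<and> card S = i}. s_mon s (sorted_list_of_set S) (g S))"

end

theory Submission
  imports Defs
begin

text \<open>Because \<open>t\<^sub>k s\<^sub>k + s\<^sub>k t\<^sub>k = 1\<close>, applying a word \<open>s\<^sub>j\<^sub>1 \<dots> s\<^sub>j\<^sub>m\<close> with distinct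
  letters to a vector killed by all \<open>t\<^sub>k\<close> is injective, and the result is killed by every
  \<open>t\<^sub>k\<close> with \<open>k\<close> outside the word; starting from \<open>f \<noteq> 0\<close> in \<open>F 0\<close> this gives nonzero
  vectors in the degrees \<open>0, \<dots>, p\<close>.

  If \<open>F\<close> vanishes above \<open>p\<close>, the word \<open>s\<^sub>1 \<dots> s\<^sub>p\<close> shows that a vector of positive degree
  killed by all \<open>t\<^sub>k\<close> is zero. As \<open>s\<^sub>j\<^sup>2\<close> and \<open>s\<^sub>j s\<^sub>k + s\<^sub>k s\<^sub>j\<close> commute with every
  \<open>t\<^sub>m\<close>, induction on the degree gives the exterior relations for the \<open>s\<^sub>j\<close>. Dually, a
  vector of degree \<open>d\<close> killed by more than \<open>d\<close> of the \<open>s\<^sub>j\<close> is zero, and as \<open>t\<^sub>m\<^sup>2\<close>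
  and \<open>t\<^sub>m t\<^sub>l + t\<^sub>l t\<^sub>m\<close> commute with every \<open>s\<^sub>j\<close>, downward induction from the top
  degree gives the exterior relations for the \<open>t\<^sub>m\<close>.

  The exterior relations make \<open>s\<^sub>S \<otimes> f \<mapsto> s\<^sub>S f\<close> well defined on \<open>E \<otimes> F 0\<close>; applying
  the word in the letters outside \<open>T\<close> kills every summand except the \<open>T\<close>-th, which gives
  injectivity. For surjectivity, \<open>x\<close> agrees with \<open>t\<^sub>j s\<^sub>j x\<close> modulo \<open>s\<^sub>j F (n - 1)\<close>;
  running through \<open>j = 1, \<dots>, p\<close> replaces \<open>x\<close> by a vector killed by all \<open>t\<^sub>j\<close>, hence by
  zero.\<close>

lemma lin_on_mem: "lin_on scale X Y f \<Longrightarrow> x \<in> X \<Longrightarrow> f x \<in> Y"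
  unfolding lin_on_def by blast

lemma lin_on_add: "lin_on scale X Y f \<Longrightarrow> x \<in> X \<Longrightarrow> y \<in> X \<Longrightarrow> f (x + y) = f x + f y"
  unfolding lin_on_def by blast

lemma lin_on_comp:
  "lin_on scale X Y f \<Longrightarrow> lin_on scale Y Z g \<Longrightarrow> lin_on scale X Z (\<lambda>x. g (f x))"
  unfolding lin_on_def by auto

context module
begin

lemma lin_on_zero: "subspace X \<Longrightarrow> lin_on scale X Y f \<Longrightarrow> f 0 = 0"
  using lin_on_add[of scale X Y f 0 0] subspace_0 by fastforce

lemma lin_on_diff:
  assumes "subspace X" "lin_on scale X Y f" "x \<in> X" "y \<in> X"
  shows "f (x - y) = f x - f y"
  using lin_on_add[OF assms(2) subspace_diff[OF assms(1,3,4)] assms(4)] by (simp add: eq_diff_eq)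

lemma lin_on_minus:
  assumes "subspace X" "lin_on scale X Y f" "x \<in> X"
  shows "f (- x) = - f x"
  using lin_on_diff[OF assms(1,2) subspace_0[OF assms(1)] assms(3)] lin_on_zero[OF assms(1,2)]
  by simp

lemma lin_on_sum:
  assumes "subspace X" "lin_on scale X Y f" "\<And>b. b \<in> B \<Longrightarrow> v b \<in> X"
  shows "f (sum v B) = (\<Sum>b\<in>B. f (v b))"
  using assms(3)
proof (induction B rule: infinite_finite_induct)
  case (insert b B)
  have "sum v B \<in> X"
    using subspace_sum[OF assms(1)] insert.prems by blast
  then show ?case using insert lin_on_add[OF assms(2)] by simp
qed (use lin_on_zero[OF assms(1,2)] in simp_all)

end

fun s_word :: "(nat \<Rightarrow> nat \<Rightarrow> 'm \<Rightarrow> 'm) \<Rightarrow> nat \<Rightarrow> nat list \<Rightarrow> 'm \<Rightarrow> 'm" where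
  "s_word s i [] x = x"
| "s_word s i (j # js) x = s j (i + length js) (s_word s i js x)"

lemma s_mon_eq_s_word: "s_mon s L x = s_word s 0 L x"
  by (induction L) auto

lemma s_word_append: "s_word s (i + length L) C (s_word s i L x) = s_word s i (C @ L) x"
  by (induction C) (simp_all add: ac_simps)

locale graded_W =
  fixes scale :: "'a::comm_ring_1 \<Rightarrow> 'm::ab_group_add \<Rightarrow> 'm"
    and p :: nat and F :: "nat \<Rightarrow> 'm set"
    and s t :: "nat \<Rightarrow> nat \<Rightarrow> 'm \<Rightarrow> 'm"
  assumes graded_W_module: "graded_W_module scale p F s t"
begin

sublocale module scale
  using graded_W_module unfolding graded_W_module_def by blast

lemma F_subspace: "subspace (F i)"
  using graded_W_module unfolding graded_W_module_def by blast

lemma F_zero [simp]: "0 \<in> F i"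
  by (rule subspace_0[OF F_subspace])

lemmas F_add = subspace_add[OF F_subspace]
  and F_diff = subspace_diff[OF F_subspace]
  and F_minus = subspace_neg[OF F_subspace]
  and F_sum = subspace_sum[OF F_subspace]

lemma s_lin: "j \<in> {1..p} \<Longrightarrow> lin_on scale (F i) (F (Suc i)) (s j i)"
  using graded_W_module unfolding graded_W_module_def by blast

lemma t_lin: "k \<in> {1..p} \<Longrightarrow> lin_on scale (F (Suc i)) (F i) (t k (Suc i))"
  using graded_W_module unfolding graded_W_module_def by blast

lemmas s_mem = lin_on_mem[OF s_lin]
  and s_add = lin_on_add[OF s_lin]
  and s_zero [simp] = lin_on_zero[OF F_subspace s_lin]
  and s_diff = lin_on_diff[OF F_subspace s_lin]
  and s_minus = lin_on_minus[OF F_subspace s_lin]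
  and s_sum = lin_on_sum[OF F_subspace s_lin]
  and t_mem = lin_on_mem[OF t_lin]
  and t_add = lin_on_add[OF t_lin]
  and t_zero [simp] = lin_on_zero[OF F_subspace t_lin]
  and t_diff = lin_on_diff[OF F_subspace t_lin]

lemma t_s_0:
  "j \<in> {1..p} \<Longrightarrow> k \<in> {1..p} \<Longrightarrow> x \<in> F 0 \<Longrightarrow> t k (Suc 0) (s j 0 x) = (if j = k then x else 0)"
  using graded_W_module unfolding graded_W_module_def One_nat_def by blast

lemma s_t_add_t_s:
  "j \<in> {1..p} \<Longrightarrow> k \<in> {1..p} \<Longrightarrow> x \<in> F (Suc i) \<Longrightarrow>
    s j i (t k (Suc i) x) + t k (Suc (Suc i)) (s j (Suc i) x) = (if j = k then x else 0)"
  using graded_W_module unfolding graded_W_module_def by blast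

lemma s_t_eq:
  "j \<in> {1..p} \<Longrightarrow> k \<in> {1..p} \<Longrightarrow> x \<in> F (Suc i) \<Longrightarrow>
    s j i (t k (Suc i) x) = (if j = k then x else 0) - t k (Suc (Suc i)) (s j (Suc i) x)"
  using s_t_add_t_s by (simp add: eq_diff_eq)

text \<open>Since \<open>F (-1) = 0\<close>, each \<open>t\<^sub>k\<close> acts by zero on \<open>F 0\<close>. Extending \<open>t k\<close> by zero to
  degree 0 lets the relation \<open>t\<^sub>k s\<^sub>j + s\<^sub>j t\<^sub>k = \<delta>\<^sub>j\<^sub>k\<close> be stated uniformly
  (\<open>t_s_eq\<close>); in degree 0 the truncated index \<open>i - 1\<close> there is harmless because
  \<open>lower k 0 x = 0\<close>.\<close>

definition lower :: "nat \<Rightarrow> nat \<Rightarrow> 'm \<Rightarrow> 'm" where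
  "lower k i x = (if i = 0 then 0 else t k i x)"

lemma lower_mem: "k \<in> {1..p} \<Longrightarrow> x \<in> F i \<Longrightarrow> lower k i x \<in> F (i - 1)"
  by (cases i) (simp_all add: lower_def t_mem)

lemma s_lower_mem:
  "j \<in> {1..p} \<Longrightarrow> k \<in> {1..p} \<Longrightarrow> x \<in> F i \<Longrightarrow> s j (i - 1) (lower k i x) \<in> F i"
  by (cases i) (simp_all add: lower_def s_mem t_mem)

lemma t_s_eq:
  "j \<in> {1..p} \<Longrightarrow> k \<in> {1..p} \<Longrightarrow> x \<in> F i \<Longrightarrow>
    t k (Suc i) (s j i x) = (if j = k then x else 0) - s j (i - 1) (lower k i x)"
  by (cases i) (simp_all add: lower_def t_s_0 s_t_eq)

lemma s_word_lin: "set L \<subseteq> {1..p} \<Longrightarrow> lin_on scale (F i) (F (i + length L)) (s_word s i L)"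
proof (induction L)
  case Nil
  then show ?case by (simp add: lin_on_def)
next
  case (Cons j js)
  have "lin_on scale (F i) (F (i + length js)) (s_word s i js)" and j: "j \<in> {1..p}"
    using Cons by auto
  then have "lin_on scale (F i) (F (Suc (i + length js))) (\<lambda>x. s j (i + length js) (s_word s i js x))"
    using lin_on_comp s_lin by blast
  then show ?case unfolding lin_on_def by simp
qed

lemmas s_word_mem = lin_on_mem[OF s_word_lin]
  and s_word_sum = lin_on_sum[OF F_subspace s_word_lin]

lemma lower_s_word:
  assumes x: "x \<in> F i" and vacuum: "\<forall>k\<in>{1..p}. lower k i x = 0"
    and L: "distinct L" "set L \<subseteq> {1..p}" and k: "k \<in> {1..p} - set L"
  shows "lower k (i + length L) (s_word s i L x) = 0"
  using L k
proof (induction L)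
  case Nil
  then show ?case using vacuum by simp
next
  case (Cons j js)
  then have j: "j \<in> {1..p}" and y: "s_word s i js x \<in> F (i + length js)"
    using s_word_mem[OF _ x] by auto
  then show ?case using Cons t_s_eq[OF j _ y, of k] by (simp add: lower_def)
qed

lemma s_word_eq_0_iff:
  assumes x: "x \<in> F i" and vacuum: "\<forall>k\<in>{1..p}. lower k i x = 0"
    and L: "distinct L" "set L \<subseteq> {1..p}"
  shows "s_word s i L x = 0 \<longleftrightarrow> x = 0"
  using L
proof (induction L)
  case (Cons j js)
  let ?y = "s_word s i js x"
  have j: "j \<in> {1..p}" and y: "?y \<in> F (i + length js)"
    using Cons.prems s_word_mem[OF _ x] by auto
  have "lower j (i + length js) ?y = 0"
    using lower_s_word[OF x vacuum] Cons.prems by auto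
  then have "t j (Suc (i + length js)) (s j (i + length js) ?y) = ?y"
    using t_s_eq[OF j j y] j by simp
  then have "s j (i + length js) ?y = 0 \<longleftrightarrow> ?y = 0"
    using j by force
  then show ?case using Cons by simp
qed simp

lemma F_ne_zero:
  assumes "F 0 \<noteq> {0}" "i \<le> p"
  shows "F i \<noteq> {0}"
proof -
  obtain f where f: "f \<in> F 0" "f \<noteq> 0"
    using assms(1) F_zero by blast
  let ?L = "[1..<Suc i]"
  have L: "distinct ?L" "set ?L \<subseteq> {1..p}"
    using assms(2) by auto
  have "s_word s 0 ?L f \<noteq> 0"
    using s_word_eq_0_iff[OF f(1) _ L] f(2) by (simp add: lower_def)
  moreover have "s_word s 0 ?L f \<in> F i"
    using s_word_mem[OF L(2) f(1)] by (simp del: upt_Suc)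
  ultimately show ?thesis by blast
qed

lemma eq_0_if_killed_by_s:
  assumes "w \<in> F d" "J \<subseteq> {1..p}" "d < card J" "\<forall>k\<in>J. s k d w = 0"
  shows "w = 0"
  using assms
proof (induction d arbitrary: w J rule: less_induct)
  case (less d)
  obtain j where j: "j \<in> J"
    using less.prems(3) by fastforce
  then have jp: "j \<in> {1..p}" and "finite J"
    using less.prems(2) finite_subset by auto
  have w_eq: "w = s j (d - 1) (lower j d w)"
    using t_s_eq[OF jp jp less.prems(1)] less.prems(4) j jp by simp
  have "lower j d w = 0"
  proof (cases d)
    case (Suc d')
    have "s k d' (lower j d w) = 0" if k: "k \<in> J - {j}" for k
    proof -
      have "k \<in> {1..p}" using k less.prems(2) by auto
      then show ?thesis
        using t_s_eq[OF _ jp less.prems(1), of k] less.prems(4) k jp Suc by auto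
    qed
    moreover have "d' < card (J - {j})"
      using less.prems(3) \<open>finite J\<close> j Suc by simp
    ultimately show ?thesis
      using less.IH[of d' "lower j d w" "J - {j}"] lower_mem[OF jp less.prems(1)] less.prems(2) Suc
      by auto
  qed (simp add: lower_def)
  then show ?case using w_eq jp by simp
qed

lemma t_s_s:
  assumes j: "j \<in> {1..p}" and k: "k \<in> {1..p}" and m: "m \<in> {1..p}" and y: "y \<in> F d"
  shows "t m (Suc (Suc d)) (s j (Suc d) (s k d y)) =
    (if j = m then s k d y else 0) - (if k = m then s j d y else 0) + s j d (s k (d - 1) (lower m d y))"
proof -
  have sky: "s k d y \<in> F (Suc d)"
    using s_mem[OF k y] .
  have "t m (Suc (Suc d)) (s j (Suc d) (s k d y)) =
      (if j = m then s k d y else 0) - s j d (lower m (Suc d) (s k d y))"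
    using t_s_eq[OF j m sky] by simp
  also have "lower m (Suc d) (s k d y) = (if k = m then y else 0) - s k (d - 1) (lower m d y)"
    using t_s_eq[OF k m y] by (simp add: lower_def)
  also have "s j d \<dots> = (if k = m then s j d y else 0) - s j d (s k (d - 1) (lower m d y))"
    using s_diff[OF j _ s_lower_mem[OF k m y]] y j by auto
  finally show ?thesis
    by (simp add: algebra_simps)
qed

lemma s_t_t:
  assumes j: "j \<in> {1..p}" and m: "m \<in> {1..p}" and l: "l \<in> {1..p}" and z: "z \<in> F (Suc (Suc n))"
  shows "s j n (t m (Suc n) (t l (Suc (Suc n)) z)) =
    (if j = m then t l (Suc (Suc n)) z else 0) - (if j = l then t m (Suc (Suc n)) z else 0)
    + t m (Suc (Suc n)) (t l (Suc (Suc (Suc n))) (s j (Suc (Suc n)) z))"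
proof -
  have tlz: "t l (Suc (Suc n)) z \<in> F (Suc n)"
    using t_mem[OF l z] .
  have "s j n (t m (Suc n) (t l (Suc (Suc n)) z)) =
      (if j = m then t l (Suc (Suc n)) z else 0) - t m (Suc (Suc n)) (s j (Suc n) (t l (Suc (Suc n)) z))"
    using s_t_eq[OF j m tlz] .
  also have "s j (Suc n) (t l (Suc (Suc n)) z) =
      (if j = l then z else 0) - t l (Suc (Suc (Suc n))) (s j (Suc (Suc n)) z)"
    using s_t_eq[OF j l z] .
  also have "t m (Suc (Suc n)) \<dots> = (if j = l then t m (Suc (Suc n)) z else 0)
      - t m (Suc (Suc n)) (t l (Suc (Suc (Suc n))) (s j (Suc (Suc n)) z))"
    using t_diff[OF m _ t_mem[OF l s_mem[OF j z]]] z m by auto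
  finally show ?thesis
    by (simp add: algebra_simps)
qed

abbreviation subsets :: "nat \<Rightarrow> nat set set" where
  "subsets n \<equiv> {S. S \<subseteq> {1..p} \<and> card S = n}"

lemma finite_subsets: "finite (subsets n)"
  by (rule finite_subset[of _ "Pow {1..p}"]) auto

lemma sorted_list_of_subset:
  assumes "S \<in> subsets n"
  shows "set (sorted_list_of_set S) = S" "length (sorted_list_of_set S) = n"
  using assms finite_subset[of S "{1..p}"] by auto

lemma s_mon_lin: "set L \<subseteq> {1..p} \<Longrightarrow> lin_on scale (F 0) (F (length L)) (s_mon s L)"
  using s_word_lin[of L 0] by (simp add: s_mon_eq_s_word[abs_def])

lemmas s_mon_mem = lin_on_mem[OF s_mon_lin]
  and s_mon_zero = lin_on_zero[OF F_subspace s_mon_lin]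
  and s_mon_add = lin_on_add[OF s_mon_lin]
  and s_mon_diff = lin_on_diff[OF F_subspace s_mon_lin]
  and s_mon_minus = lin_on_minus[OF F_subspace s_mon_lin]

lemma EF0_mem: "g \<in> EF0 p F n \<Longrightarrow> g S \<in> F 0"
  unfolding EF0_def by blast

lemma EF0_support: "g \<in> EF0 p F n \<Longrightarrow> S \<notin> subsets n \<Longrightarrow> g S = 0"
  unfolding EF0_def by blast

lemma EF0_add: "g \<in> EF0 p F n \<Longrightarrow> h \<in> EF0 p F n \<Longrightarrow> (\<lambda>S. g S + h S) \<in> EF0 p F n"
proof -
  assume g: "g \<in> EF0 p F n" and h: "h \<in> EF0 p F n"
  have "g S + h S \<noteq> 0 \<Longrightarrow> S \<in> subsets n" for S
    using EF0_support[OF g] EF0_support[OF h] by fastforce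
  then show ?thesis
    unfolding EF0_def using F_add EF0_mem[OF g] EF0_mem[OF h] by blast
qed

lemma EF0_single: "T \<in> subsets n \<Longrightarrow> v \<in> F 0 \<Longrightarrow> (\<lambda>S. if S = T then v else 0) \<in> EF0 p F n"
  unfolding EF0_def by auto

lemma s_mon_subset_mem: "S \<in> subsets n \<Longrightarrow> v \<in> F 0 \<Longrightarrow> s_mon s (sorted_list_of_set S) v \<in> F n"
  using s_mon_mem[of "sorted_list_of_set S" v] sorted_list_of_subset[of S n] by simp

lemma mult_map_mem: "g \<in> EF0 p F n \<Longrightarrow> mult_map p s n g \<in> F n"
  unfolding mult_map_def by (intro F_sum s_mon_subset_mem EF0_mem) auto

lemma mult_map_add:
  assumes "g \<in> EF0 p F n" "h \<in> EF0 p F n"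
  shows "mult_map p s n (\<lambda>S. g S + h S) = mult_map p s n g + mult_map p s n h"
  unfolding mult_map_def sum.distrib[symmetric]
  by (intro sum.cong refl s_mon_add) (use assms sorted_list_of_subset EF0_mem in auto)

lemma mult_map_single:
  assumes "T \<in> subsets n"
  shows "mult_map p s n (\<lambda>S. if S = T then v else 0) = s_mon s (sorted_list_of_set T) v"
proof -
  have "mult_map p s n (\<lambda>S. if S = T then v else 0) =
      (\<Sum>S\<in>subsets n. if S = T then s_mon s (sorted_list_of_set T) v else 0)"
    unfolding mult_map_def
    by (intro sum.cong refl) (use sorted_list_of_subset s_mon_zero in auto)
  then show ?thesis
    using finite_subsets assms by simp
qed

abbreviation mult_image :: "nat \<Rightarrow> 'm set" where
  "mult_image n \<equiv> mult_map p s n ` EF0 p F n"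

lemma zero_mult_image: "0 \<in> mult_image n"
proof -
  have "mult_map p s n (\<lambda>S. 0) = 0"
    unfolding mult_map_def using sorted_list_of_subset s_mon_zero by (intro sum.neutral) auto
  moreover have "(\<lambda>S. 0) \<in> EF0 p F n"
    unfolding EF0_def by simp
  ultimately show ?thesis
    by (metis image_eqI)
qed

lemma add_mult_image: "x \<in> mult_image n \<Longrightarrow> y \<in> mult_image n \<Longrightarrow> x + y \<in> mult_image n"
  by (auto simp flip: mult_map_add intro: EF0_add)

lemma sum_mult_image:
  "(\<And>b. b \<in> B \<Longrightarrow> v b \<in> mult_image n) \<Longrightarrow> sum v B \<in> mult_image n"
  by (induction B rule: infinite_finite_induct) (auto simp: zero_mult_image add_mult_image)

end

locale bounded_graded_W = graded_W +
  assumes F_top: "\<forall>i\<ge>p + 1. F i = {0}"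
begin

lemma eq_0_if_killed_by_t:
  assumes x: "x \<in> F n" and n: "0 < n" and killed: "\<forall>k\<in>{1..p}. t k n x = 0"
  shows "x = 0"
proof -
  let ?L = "[1..<Suc p]"
  have L: "distinct ?L" "set ?L \<subseteq> {1..p}"
    by auto
  have "s_word s n ?L x \<in> F (n + p)"
    using s_word_mem[OF L(2) x] by (simp del: upt_Suc)
  then have "s_word s n ?L x = 0"
    using F_top n by auto
  moreover have "\<forall>k\<in>{1..p}. lower k n x = 0"
    using killed n by (simp add: lower_def)
  ultimately show ?thesis
    using s_word_eq_0_iff[OF x _ L] by blast
qed

lemma s_s_relations:
  assumes "y \<in> F d" "j \<in> {1..p}" "k \<in> {1..p}"
  shows "s j (Suc d) (s j d y) = 0 \<and> s j (Suc d) (s k d y) + s k (Suc d) (s j d y) = 0"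
  using assms
proof (induction d arbitrary: y j k rule: less_induct)
  case (less d)
  note y = less.prems(1) and j = less.prems(2) and k = less.prems(3)
  have lower_terms: "s j d (s j (d - 1) (lower m d y)) = 0 \<and>
      s j d (s k (d - 1) (lower m d y)) + s k d (s j (d - 1) (lower m d y)) = 0"
    if m: "m \<in> {1..p}" for m
  proof (cases d)
    case (Suc d')
    then show ?thesis
      using less.IH[of d' "lower m d y" j k] lower_mem[OF m y] j k by simp
  qed (simp add: lower_def s_zero[OF j] s_zero[OF k])
  have sjj: "s j (Suc d) (s j d y) \<in> F (Suc (Suc d))"
    and sjk: "s j (Suc d) (s k d y) \<in> F (Suc (Suc d))"
    and skj: "s k (Suc d) (s j d y) \<in> F (Suc (Suc d))"
    using s_mem j k y by auto
  have "s j (Suc d) (s j d y) = 0"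
    by (rule eq_0_if_killed_by_t[OF sjj]) (use t_s_s[OF j j _ y] lower_terms in simp_all)
  moreover have "s j (Suc d) (s k d y) + s k (Suc d) (s j d y) = 0"
  proof (rule eq_0_if_killed_by_t)
    show "\<forall>m\<in>{1..p}. t m (Suc (Suc d)) (s j (Suc d) (s k d y) + s k (Suc d) (s j d y)) = 0"
      using t_add[OF _ sjk skj] t_s_s[OF j k _ y] t_s_s[OF k j _ y] lower_terms
      by (simp add: algebra_simps)
  qed (use F_add[OF sjk skj] in simp_all)
  ultimately show ?case ..
qed

lemma s_s_eq_0: "y \<in> F d \<Longrightarrow> j \<in> {1..p} \<Longrightarrow> s j (Suc d) (s j d y) = 0"
  using s_s_relations by blast

lemma s_s_anticomm:
  "y \<in> F d \<Longrightarrow> j \<in> {1..p} \<Longrightarrow> k \<in> {1..p} \<Longrightarrow>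
    s j (Suc d) (s k d y) = - s k (Suc d) (s j d y)"
  using s_s_relations by (simp add: eq_neg_iff_add_eq_0)

lemma eq_0_if_commutes_with_s:
  assumes mem: "\<And>n z. z \<in> F (Suc (Suc n)) \<Longrightarrow> \<phi> n z \<in> F n"
    and zero: "\<And>n. \<phi> n 0 = 0"
    and comm: "\<And>n j z. j \<in> {1..p} \<Longrightarrow> z \<in> F (Suc (Suc n)) \<Longrightarrow>
      s j n (\<phi> n z) = \<phi> (Suc n) (s j (Suc (Suc n)) z)"
    and z: "z \<in> F (Suc (Suc n))"
  shows "\<phi> n z = 0"
proof -
  have top: "\<forall>z\<in>F (Suc (Suc n)). \<phi> n z = 0" if "p \<le> n" for n
    using F_top that zero by auto
  have "\<forall>z\<in>F (Suc (Suc n)). \<phi> n z = 0" if "n \<le> p" for n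
    using that
  proof (induction n rule: inc_induct)
    case base
    then show ?case using top by simp
  next
    case (step n)
    show ?case
    proof
      fix z assume z: "z \<in> F (Suc (Suc n))"
      have "\<forall>j\<in>{1..p}. s j n (\<phi> n z) = 0"
        using comm[OF _ z] step.IH s_mem[OF _ z] by simp
      then show "\<phi> n z = 0"
        using eq_0_if_killed_by_s[OF mem[OF z], of "{1..p}"] step.hyps by simp
    qed
  qed
  then show ?thesis
    using top z nat_le_linear by blast
qed

lemma t_t_eq_0:
  assumes m: "m \<in> {1..p}" and z: "z \<in> F (Suc (Suc n))"
  shows "t m (Suc n) (t m (Suc (Suc n)) z) = 0"
proof (rule eq_0_if_commutes_with_s[where \<phi> = "\<lambda>n z. t m (Suc n) (t m (Suc (Suc n)) z)"])
  fix n j z assume j: "j \<in> {1..p}" and z: "z \<in> F (Suc (Suc n))"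
  show "s j n (t m (Suc n) (t m (Suc (Suc n)) z)) =
      t m (Suc (Suc n)) (t m (Suc (Suc (Suc n))) (s j (Suc (Suc n)) z))"
    using s_t_t[OF j m m z] by simp
qed (use m z in \<open>simp_all add: t_mem\<close>)

lemma t_t_anticomm:
  assumes m: "m \<in> {1..p}" and l: "l \<in> {1..p}" and z: "z \<in> F (Suc (Suc n))"
  shows "t m (Suc n) (t l (Suc (Suc n)) z) = - t l (Suc n) (t m (Suc (Suc n)) z)"
proof -
  let ?\<phi> = "\<lambda>n z. t m (Suc n) (t l (Suc (Suc n)) z) + t l (Suc n) (t m (Suc (Suc n)) z)"
  have "?\<phi> n z = 0"
  proof (rule eq_0_if_commutes_with_s[where \<phi> = ?\<phi>])
    fix n j z assume j: "j \<in> {1..p}" and z: "z \<in> F (Suc (Suc n))"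
    show "s j n (?\<phi> n z) = ?\<phi> (Suc n) (s j (Suc (Suc n)) z)"
      using s_add[OF j t_mem[OF m t_mem[OF l z]] t_mem[OF l t_mem[OF m z]]]
        s_t_t[OF j m l z] s_t_t[OF j l m z]
      by (simp add: algebra_simps)
  qed (use m l z in \<open>simp_all add: t_mem F_add\<close>)
  then show ?thesis
    by (simp add: eq_neg_iff_add_eq_0)
qed

lemma s_s_mon_eq_0_if_mem:
  assumes "set M \<subseteq> {1..p}" "a \<in> set M" "f \<in> F 0"
  shows "s a (length M) (s_mon s M f) = 0"
  using assms
proof (induction M)
  case (Cons b M)
  have a: "a \<in> {1..p}" and b: "b \<in> {1..p}" and y: "s_mon s M f \<in> F (length M)"
    using Cons.prems s_mon_mem[of M f] by auto
  show ?case
  proof (cases "a = b")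
    case True
    then show ?thesis using s_s_eq_0[OF y a] by simp
  next
    case False
    then show ?thesis using Cons s_s_anticomm[OF y a b] b by simp
  qed
qed simp

lemma s_mon_eq_0_if_not_distinct:
  assumes "set L \<subseteq> {1..p}" "\<not> distinct L" "f \<in> F 0"
  shows "s_mon s L f = 0"
  using assms
proof (induction L)
  case (Cons a L)
  then show ?case
    using s_s_mon_eq_0_if_mem[of L a f] by (cases "a \<in> set L") auto
qed simp

lemma s_s_mon_insort:
  assumes "sorted M" "set M \<subseteq> {1..p}" "a \<in> {1..p}" "a \<notin> set M" "f \<in> F 0"
  shows "s a (length M) (s_mon s M f) \<in> {s_mon s (insort a M) f, - s_mon s (insort a M) f}"
  using assms
proof (induction M)
  case (Cons b M)
  let ?y = "s_mon s M f" and ?n = "length M"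
  have a: "a \<in> {1..p}" and b: "b \<in> {1..p}" and y: "?y \<in> F ?n"
    using Cons.prems s_mon_mem[of M f] by auto
  consider "a < b" | "b < a"
    using Cons.prems(4) by fastforce
  then show ?case
  proof cases
    case 1
    then show ?thesis by simp
  next
    case 2
    have ins: "s_mon s (insort a M) f \<in> F (Suc ?n)"
      using s_mon_mem[of "insort a M" f] Cons.prems by (simp add: set_insort_key)
    have "s a (Suc ?n) (s b ?n ?y) = - s b (Suc ?n) (s a ?n ?y)"
      using s_s_anticomm[OF y a b] .
    moreover have "s a ?n ?y \<in> {s_mon s (insort a M) f, - s_mon s (insort a M) f}"
      using Cons by simp
    ultimately show ?thesis
      using 2 s_minus[OF b ins] by auto
  qed
qed simp

lemma s_mon_sort:
  assumes "distinct L" "set L \<subseteq> {1..p}" "f \<in> F 0"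
  shows "s_mon s L f \<in> {s_mon s (sort L) f, - s_mon s (sort L) f}"
  using assms
proof (induction L)
  case (Cons a L)
  let ?Y = "s_mon s (sort L) f"
  have a: "a \<in> {1..p}" and Y: "?Y \<in> F (length L)"
    using Cons.prems s_mon_mem[of "sort L" f] by auto
  have "s a (length L) ?Y \<in> {s_mon s (sort (a # L)) f, - s_mon s (sort (a # L)) f}"
    using s_s_mon_insort[of "sort L" a f] Cons.prems by simp
  moreover have "s_mon s L f \<in> {?Y, - ?Y}"
    using Cons by simp
  ultimately show ?case
    using s_minus[OF a Y] by auto
qed simp

lemma s_mon_mult_image:
  assumes L: "set L \<subseteq> {1..p}" and f: "f \<in> F 0"
  shows "s_mon s L f \<in> mult_image (length L)"
proof (cases "distinct L")
  case False
  then show ?thesis using s_mon_eq_0_if_not_distinct[OF L _ f] zero_mult_image by simp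
next
  case True
  have T: "set L \<in> subsets (length L)"
    using L True by (simp add: distinct_card)
  have sorted_L: "sorted_list_of_set (set L) = sort L"
    using True by (simp add: sorted_list_of_set_sort_remdups distinct_remdups_id)
  have "\<exists>v\<in>{f, - f}. s_mon s L f = s_mon s (sort L) v"
    using s_mon_sort[OF True L f] s_mon_minus[of "sort L" f] L f by auto
  then obtain v where v: "v \<in> F 0" "s_mon s L f = s_mon s (sort L) v"
    using f F_minus by blast
  then have "s_mon s L f = mult_map p s (length L) (\<lambda>S. if S = set L then v else 0)"
    using mult_map_single[OF T] sorted_L by simp
  then show ?thesis
    using EF0_single[OF T v(1)] by blast
qed

lemma s_mult_image:
  assumes j: "j \<in> {1..p}" and y: "y \<in> mult_image n"
  shows "s j n y \<in> mult_image (Suc n)"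
proof -
  obtain g where g: "g \<in> EF0 p F n" "y = mult_map p s n g"
    using y by blast
  have "s j n y = (\<Sum>S\<in>subsets n. s j n (s_mon s (sorted_list_of_set S) (g S)))"
    unfolding g(2) mult_map_def
    by (rule s_sum[OF j]) (rule s_mon_subset_mem, assumption, rule EF0_mem[OF g(1)])
  also have "\<dots> \<in> mult_image (Suc n)"
  proof (rule sum_mult_image)
    fix S assume S: "S \<in> subsets n"
    have "s_mon s (j # sorted_list_of_set S) (g S) \<in> mult_image (Suc n)"
      using s_mon_mult_image[of "j # sorted_list_of_set S" "g S"] sorted_list_of_subset[OF S]
        j S EF0_mem[OF g(1)] by auto
    then show "s j n (s_mon s (sorted_list_of_set S) (g S)) \<in> mult_image (Suc n)"
      using sorted_list_of_subset(2)[OF S] by simp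
  qed
  finally show ?thesis .
qed

lemma t_killed_representative:
  assumes x: "x \<in> F (Suc n)" and IH: "F n \<subseteq> mult_image n" and "k \<le> p"
  shows "\<exists>y\<in>F (Suc n). x - y \<in> mult_image (Suc n) \<and>
    (\<forall>i\<in>{1..k}. t i (Suc n) y = 0)"
  using \<open>k \<le> p\<close>
proof (induction k)
  case 0
  show ?case
    using x zero_mult_image by (intro bexI[of _ x]) auto
next
  case (Suc k)
  then obtain y where y: "y \<in> F (Suc n)" "x - y \<in> mult_image (Suc n)"
    and killed: "\<forall>i\<in>{1..k}. t i (Suc n) y = 0"
    by auto
  define j where "j = Suc k"
  have j: "j \<in> {1..p}"
    using Suc.prems j_def by simp
  let ?y' = "t j (Suc (Suc n)) (s j (Suc n) y)"
  have sjy: "s j (Suc n) y \<in> F (Suc (Suc n))"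
    using s_mem[OF j y(1)] .
  have "y - ?y' = s j n (t j (Suc n) y)"
    using s_t_eq[OF j j y(1)] by simp
  also have "\<dots> \<in> mult_image (Suc n)"
    using s_mult_image[OF j] IH t_mem[OF j y(1)] by blast
  finally have "(x - y) + (y - ?y') \<in> mult_image (Suc n)"
    using add_mult_image y(2) by blast
  moreover have "t i (Suc n) ?y' = 0" if i: "i \<in> {1..j}" for i
  proof (cases "i = j")
    case True
    then show ?thesis using t_t_eq_0[OF j sjy] by simp
  next
    case False
    then have ip: "i \<in> {1..p}" and "i \<in> {1..k}"
      using i j j_def by auto
    then have "t i (Suc (Suc n)) (s j (Suc n) y) = 0"
      using t_s_eq[OF j ip y(1)] False killed j by (simp add: lower_def)
    then show ?thesis
      using t_t_anticomm[OF ip j sjy] j by simp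
  qed
  ultimately show ?case
    using t_mem[OF j sjy] j_def by auto
qed

lemma mult_image_eq: "mult_image n = F n"
proof
  show "mult_image n \<subseteq> F n"
    using mult_map_mem by blast
  show "F n \<subseteq> mult_image n"
  proof (induction n)
    case 0
    then show ?case using s_mon_mult_image[of "[]"] by auto
  next
    case (Suc n)
    show ?case
    proof
      fix x assume x: "x \<in> F (Suc n)"
      obtain y where "y \<in> F (Suc n)" "x - y \<in> mult_image (Suc n)"
        and "\<forall>i\<in>{1..p}. t i (Suc n) y = 0"
        using t_killed_representative[OF x Suc.IH] by blast
      then show "x \<in> mult_image (Suc n)"
        using eq_0_if_killed_by_t[of y "Suc n"] by simp
    qed
  qed
qed

lemma s_word_complement_mult_map:
  assumes g: "g \<in> EF0 p F n" and T: "T \<in> subsets n"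
  defines "C \<equiv> sorted_list_of_set ({1..p} - T)"
  shows "s_word s n C (mult_map p s n g) = s_mon s (C @ sorted_list_of_set T) (g T)"
proof -
  have C: "set C = {1..p} - T"
    unfolding C_def by simp
  have summand: "s_word s n C (s_mon s (sorted_list_of_set S) (g S)) =
      (if S = T then s_mon s (C @ sorted_list_of_set T) (g T) else 0)"
    if S: "S \<in> subsets n" for S
  proof -
    have "s_word s n C (s_mon s (sorted_list_of_set S) (g S)) =
        s_mon s (C @ sorted_list_of_set S) (g S)"
      using s_word_append[of s 0 "sorted_list_of_set S" C] sorted_list_of_subset[OF S]
      by (simp add: s_mon_eq_s_word)
    moreover have "s_mon s (C @ sorted_list_of_set S) (g S) = 0" if "S \<noteq> T"
    proof -
      have "\<not> S \<subseteq> T"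
        using S T that card_subset_eq[of T S] finite_subset[of T "{1..p}"] by auto
      then have "\<not> distinct (C @ sorted_list_of_set S)"
        using C sorted_list_of_subset(1)[OF S] S by auto
      then show ?thesis
        using s_mon_eq_0_if_not_distinct EF0_mem[OF g] C sorted_list_of_subset(1)[OF S] S by auto
    qed
    ultimately show ?thesis by simp
  qed
  have "s_word s n C (mult_map p s n g) =
      (\<Sum>S\<in>subsets n. s_word s n C (s_mon s (sorted_list_of_set S) (g S)))"
    unfolding mult_map_def
    by (rule s_word_sum[where L = C and i = n]) (use C s_mon_subset_mem EF0_mem[OF g] in auto)
  also have "\<dots> = s_mon s (C @ sorted_list_of_set T) (g T)"
    using summand finite_subsets T by simp
  finally show ?thesis .
qed

lemma mult_map_inj: "inj_on (mult_map p s n) (EF0 p F n)"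
proof (rule inj_onI, rule ext)
  fix g h T
  assume g: "g \<in> EF0 p F n" and h: "h \<in> EF0 p F n"
    and eq: "mult_map p s n g = mult_map p s n h"
  show "g T = h T"
  proof (cases "T \<in> subsets n")
    case True
    define L where "L = sorted_list_of_set ({1..p} - T) @ sorted_list_of_set T"
    have L: "distinct L" "set L \<subseteq> {1..p}"
      unfolding L_def using sorted_list_of_subset(1)[OF True] True by auto
    have "s_mon s L (g T) = s_mon s L (h T)"
      using s_word_complement_mult_map[OF g True] s_word_complement_mult_map[OF h True] eq
      unfolding L_def by simp
    then have "s_word s 0 L (g T - h T) = 0"
      using s_mon_diff[OF L(2) EF0_mem[OF g] EF0_mem[OF h]] by (simp add: s_mon_eq_s_word)
    then show ?thesis
      using s_word_eq_0_iff[OF F_diff[OF EF0_mem[OF g] EF0_mem[OF h]] _ L] by (simp add: lower_def)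
  qed (simp add: EF0_support[OF g] EF0_support[OF h])
qed

end

theorem propositionA3:
  fixes scale :: "'a::comm_ring_1 \<Rightarrow> 'm::ab_group_add \<Rightarrow> 'm"
    and p :: nat and F :: "nat \<Rightarrow> 'm set"
    and s t :: "nat \<Rightarrow> nat \<Rightarrow> 'm \<Rightarrow> 'm"
  assumes "p \<ge> 1"
    and "graded_W_module scale p F s t"
    and "F 0 \<noteq> {0}"
  shows "(\<forall>i\<le>p. F i \<noteq> {0}) \<and>
    ((\<forall>i\<ge>p + 1. F i = {0}) \<longrightarrow>
       (\<forall>j\<in>{1..p}. \<forall>k\<in>{1..p}. \<forall>f\<in>F 0.
          s j 1 (s j 0 f) = 0 \<and> s j 1 (s k 0 f) + s k 1 (s j 0 f) = 0) \<and>
       (\<forall>i. bij_betw (mult_map p s i) (EF0 p F i) (F i)))"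
proof -
  interpret graded_W scale p F s t
    by (rule graded_W.intro) (fact assms(2))
  have "\<forall>i\<le>p. F i \<noteq> {0}"
    using F_ne_zero[OF assms(3)] by blast
  moreover have "(\<forall>j\<in>{1..p}. \<forall>k\<in>{1..p}. \<forall>f\<in>F 0.
          s j 1 (s j 0 f) = 0 \<and> s j 1 (s k 0 f) + s k 1 (s j 0 f) = 0) \<and>
       (\<forall>i. bij_betw (mult_map p s i) (EF0 p F i) (F i))" if top: "\<forall>i\<ge>p + 1. F i = {0}"
  proof -
    interpret bounded_graded_W scale p F s t
      by unfold_locales (fact top)
    show ?thesis
      using s_s_relations[where d = 0] mult_map_inj mult_image_eq
      by (simp add: bij_betw_def)
  qed
  ultimately show ?thesis by blast
qed

end
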